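(* Let $\mathbb{F}^E_m$ be a floating-point format and $\mathrm{fl}:\mathbb{R}\to\mathbb{F}^E_m\cup\{-\infty,+\infty\}$ its rounding function in round-to-nearest-even mode. For any integer $\ell\in[0,2^{E-1}-2]$, the ratio $|\{\mathrm{fl}(i/2^\ell):i\in\{0,1,\ldots,2^\ell-1\}\}|\,/\,|\mathbb{F}^E_m\cap[0,1]|$ equals $\frac{2^\ell}{2^m(2^{E-1}-1)+1}$ if $\ell\le m+1$, and $\frac{2^m(\ell-m+1)+1}{2^m(2^{E-1}-1)+1}$ if $\ell>m+1$. The same holds for the set $\{\mathrm{fl}(\mathrm{fl}(i)/\mathrm{fl}(2^\ell)):i\in\{0,1,\ldots,2^\ell-1\}\}$.
   Context: $\mathbb{F}^E_m$ ($E\ge1$ exponent bits, $m\ge1$ mantissa bits, bias $b_E=2^{E-1}-1$) is regarded as a set of real numbers: with $e\in\{0,\dots,2^E-2\}$ and $f_1,\ldots,f_m\in\{0,1\}$, the finite values are $\pm(0.f_1\ldots f_m)_2\,2^{1-b_E}$ (for $e=0$, subnormals and zero) and $\pm(1.f_1\ldots f_m)_2\,2^{e-b_E}$ (for $1\le e\le 2^E-2$); $\mathbb{F}^E_m\cap[0,1]$ is the set of such values in $[0,1]$ (zero counted once). Round-to-nearest-even maps a real to the nearest element of $\mathbb{F}^E_m$, breaking ties toward the value with even last mantissa bit. *)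

theory Defs
  imports Complex_Main "HOL-Library.Extended_Real"
begin

text \<open>Floating-point format F^E_m: E exponent bits, m mantissa bits, bias 2^(E-1)-1.\<close>

definition fp_bias :: "nat \<Rightarrow> int" where
  "fp_bias E = 2 ^ (E - 1) - 1"

text \<open>fp_rep E m x f: the real x is a finite value of the format whose mantissa
  bits f_1...f_m encode the natural number f (< 2^m).\<close>
definition fp_rep :: "nat \<Rightarrow> nat \<Rightarrow> real \<Rightarrow> nat \<Rightarrow> bool" where
  "fp_rep E m x f \<longleftrightarrow> f < 2 ^ m \<and> (\<exists>s \<in> {-1, 1::real}.
      x = s * (real f / 2 ^ m) * 2 powi (1 - fp_bias E)
    \<or> (\<exists>e::nat. 1 \<le> e \<and> e \<le> 2 ^ E - 2 \<and>
         x = s * (1 + real f / 2 ^ m) * 2 powi (int e - fp_bias E)))"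

text \<open>The format regarded as a set of reals (zero counted once).\<close>
definition fp_set :: "nat \<Rightarrow> nat \<Rightarrow> real set" where
  "fp_set E m = {x. \<exists>f. fp_rep E m x f}"

definition fp_even :: "nat \<Rightarrow> nat \<Rightarrow> real \<Rightarrow> bool" where
  "fp_even E m x \<longleftrightarrow> (\<exists>f. even f \<and> fp_rep E m x f)"

definition rne_of :: "nat \<Rightarrow> nat \<Rightarrow> real \<Rightarrow> real \<Rightarrow> bool" where
  "rne_of E m x y \<longleftrightarrow> y \<in> fp_set E m \<and> (\<forall>z \<in> fp_set E m. \<bar>x - y\<bar> \<le> \<bar>x - z\<bar>) \<and>
     ((\<exists>z \<in> fp_set E m. z \<noteq> y \<and> \<bar>x - z\<bar> = \<bar>x - y\<bar>) \<longrightarrow> fp_even E m y)"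

text \<open>Rounding function fl : R -> F \<union> {-\<infinity>, +\<infinity>} in round-to-nearest-even mode,
  with the IEEE 754 overflow rule: |x| \<ge> 2^emax (2 - 2^(-m-1)) rounds to \<plusminus>\<infinity>,
  where emax = 2^E - 2 - bias.\<close>
definition fl :: "nat \<Rightarrow> nat \<Rightarrow> real \<Rightarrow> ereal" where
  "fl E m x = (if \<bar>x\<bar> \<ge> (2 - 2 powi (- (int m + 1))) * 2 powi (int (2 ^ E - 2) - fp_bias E)
      then (if x > 0 then \<infinity> else - \<infinity>)
      else ereal (THE y. rne_of E m x y))"

definition fl_ext :: "nat \<Rightarrow> nat \<Rightarrow> ereal \<Rightarrow> ereal" where
  "fl_ext E m x = (case x of ereal r \<Rightarrow> fl E m r | PInfty \<Rightarrow> \<infinity> | MInfty \<Rightarrow> - \<infinity>)"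

end

theory Submission
  imports Defs "HOL-Library.Discrete_Functions"
begin

(* Dividing by the smallest positive subnormal u = 2^(1 - bias - m) identifies the nonnegative
   floats with the naturals N < 2^(m + 2^E - 2) that have at most m + 1 significant bits, and
   round-to-nearest-even with an explicit rounding map round_nat on naturals. For l below the bias
   both i / 2^l and fl(i) / fl(2^l) round exactly like i, so both sets in the theorem are images
   of {0..<2^l} under round_nat: the (m+1)-bit naturals below 2^l (all 2^l of them if
   l <= m + 1; otherwise the 2^m naturals below 2^m and 2^m in each of the l - m binades above,
   i.e. 2^m (l - m + 1)), plus 2^l itself, to which 2^l - 1 rounds as soon as l >= m + 2.
   The floats in [0, 1] correspond in the same way to the (m+1)-bit naturals up to
   1/u = 2^(m + bias - 1), of which there are 2^m * bias + 1. *)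

section \<open>Naturals with m + 1 significant bits\<close>

definition float_nats :: "nat \<Rightarrow> nat set" where
  "float_nats m = {q * 2 ^ t | q t. q < 2 ^ (m + 1)}"

text \<open>The leading m + 1 bits of N; by truncated subtraction this is N itself when N < 2 ^ (m + 1).\<close>
definition significand :: "nat \<Rightarrow> nat \<Rightarrow> nat" where
  "significand m N = N div 2 ^ (floor_log N - m)"

text \<open>Round-to-nearest-even to m + 1 significant bits: s is the spacing of float_nats m
  in the binade of X, and X lies between the neighbours q * s and (q + 1) * s.\<close>
definition round_nat :: "nat \<Rightarrow> nat \<Rightarrow> nat" where
  "round_nat m X = (let s = 2 ^ (floor_log X - m); q = significand m X in
     if 2 * (X mod s) < s \<or> 2 * (X mod s) = s \<and> even q then q * s else (q + 1) * s)"

lemma floor_log_normal: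
  assumes "2 ^ m \<le> q" "q < 2 ^ (m + 1)"
  shows "floor_log (q * 2 ^ t) = m + t"
  using assms by (intro floor_log_eqI) (auto simp: power_add)

lemma floor_log_mult_pow2: "0 < q \<Longrightarrow> floor_log (q * 2 ^ t) = floor_log q + t"
  using floor_log_exp2_le[of q] floor_log_exp2_gt[of q]
  by (intro floor_log_eqI) (auto simp: power_add)

lemma floor_log_less_pow2:
  assumes "N < 2 ^ k" "0 < k"
  shows "floor_log N < k"
proof (cases "N = 0")
  case False
  then have "2 ^ floor_log N \<le> N" by (intro floor_log_exp2_le) simp
  then have "2 ^ floor_log N < (2::nat) ^ k" using assms(1) by linarith
  then show ?thesis by simp
qed (simp add: assms(2))

lemma pow2_less_of_less_floor_log:
  assumes "k < floor_log X"
  shows "2 ^ k < X"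
proof -
  have "0 < X" using assms by (cases "X = 0") auto
  have "(2::nat) ^ k < 2 ^ floor_log X" using assms by simp
  also have "\<dots> \<le> X" using floor_log_exp2_le[OF \<open>0 < X\<close>] .
  finally show ?thesis .
qed

lemma significand_normal:
  assumes "2 ^ m \<le> q" "q < 2 ^ (m + 1)"
  shows "significand m (q * 2 ^ t) = q"
  using assms by (simp add: significand_def floor_log_normal)

lemma significand_less: "significand m N < 2 ^ (m + 1)"
proof -
  have "N < 2 ^ (floor_log N + 1)" using floor_log_exp2_gt[of N] by simp
  also have "\<dots> \<le> 2 ^ (m + 1 + (floor_log N - m))" by (intro power_increasing) auto
  finally show ?thesis unfolding significand_def by (simp add: div_less_iff_less_mult power_add)
qed

lemma significand_bounds:
  assumes "2 ^ m \<le> N"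
  shows "2 ^ m \<le> significand m N" "significand m N < 2 ^ (m + 1)"
proof -
  have "0 < N" using assms by (cases N) simp_all
  have "m \<le> floor_log N" using floor_log_le_iff[OF assms] by simp
  show "significand m N < 2 ^ (m + 1)" by (rule significand_less)
  have "2 ^ m * 2 ^ (floor_log N - m) \<le> N"
    using floor_log_exp2_le[OF \<open>0 < N\<close>] \<open>m \<le> floor_log N\<close> by (simp add: power_add[symmetric])
  then show "2 ^ m \<le> significand m N"
    unfolding significand_def by (simp add: less_eq_div_iff_mult_less_eq)
qed

lemma significand_succ_parity:
  assumes "1 \<le> m" "2 ^ m \<le> q" "q < 2 ^ (m + 1)"
  shows "even (significand m ((q + 1) * 2 ^ t)) \<longleftrightarrow> odd q"
proof (cases "q + 1 < 2 ^ (m + 1)")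
  case True
  then show ?thesis using assms(2) significand_normal[of m "q + 1" t] by simp
next
  case False
  then have "q + 1 = 2 ^ (m + 1)" using assms(3) by simp
  then have "(q + 1) * 2 ^ t = 2 ^ m * 2 ^ (t + 1)" and "even (q + 1)"
    by (simp_all add: power_add)
  then have eq: "(q + 1) * 2 ^ t = 2 ^ m * 2 ^ (t + 1)" and "odd q" by simp_all
  have "significand m ((q + 1) * 2 ^ t) = 2 ^ m"
    unfolding eq by (rule significand_normal) simp_all
  then show ?thesis using \<open>odd q\<close> assms(1) by simp
qed

lemma float_nats_iff_dvd: "N \<in> float_nats m \<longleftrightarrow> 2 ^ (floor_log N - m) dvd N"
proof
  assume "N \<in> float_nats m"
  then obtain q t where N: "N = q * 2 ^ t" and q: "q < 2 ^ (m + 1)"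
    unfolding float_nats_def by blast
  show "2 ^ (floor_log N - m) dvd N"
  proof (cases "q = 0")
    case False
    have "floor_log q \<le> m" using floor_log_less_pow2[OF q] by simp
    then have "floor_log N - m \<le> t"
      using False by (simp add: N floor_log_mult_pow2)
    then show ?thesis unfolding N by (simp add: le_imp_power_dvd)
  qed (simp add: N)
next
  assume "2 ^ (floor_log N - m) dvd N"
  then have "N = significand m N * 2 ^ (floor_log N - m)"
    by (simp add: significand_def)
  with significand_less show "N \<in> float_nats m"
    unfolding float_nats_def by blast
qed

lemma float_nats_small: "N < 2 ^ (m + 1) \<Longrightarrow> N \<in> float_nats m"
  unfolding float_nats_def by (metis (mono_tags) CollectI mult.right_neutral power_0)

lemma pow2_in_float_nats: "2 ^ k \<in> float_nats m"
proof -
  have "(2::nat) ^ k = 1 * 2 ^ k \<and> (1::nat) < 2 ^ (m + 1)"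
    using one_less_power[of "2::nat" "m + 1"] by simp
  then show ?thesis unfolding float_nats_def by blast
qed

lemma float_nats_succ: "q < 2 ^ (m + 1) \<Longrightarrow> (q + 1) * 2 ^ t \<in> float_nats m"
proof (cases "q + 1 < 2 ^ (m + 1)")
  case False
  moreover assume "q < 2 ^ (m + 1)"
  ultimately have "q + 1 = 2 ^ (m + 1)" by simp
  then have "(q + 1) * 2 ^ t = 2 ^ (m + 1 + t)" by (simp add: power_add)
  then show ?thesis by (metis pow2_in_float_nats)
qed (auto simp: float_nats_def simp del: mult_Suc)

lemma float_nats_mult_pow2:
  assumes "N \<in> float_nats m"
  shows "N * 2 ^ c \<in> float_nats m"
proof -
  obtain q t where "N = q * 2 ^ t" "q < 2 ^ (m + 1)"
    using assms unfolding float_nats_def by blast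
  then have "N * 2 ^ c = q * 2 ^ (t + c) \<and> q < 2 ^ (m + 1)" by (simp add: power_add)
  then show ?thesis unfolding float_nats_def by blast
qed

lemma float_nats_binade:
  assumes "m \<le> n"
  shows "float_nats m \<inter> {2 ^ n..<2 ^ (n + 1)} = (\<lambda>q. q * 2 ^ (n - m)) ` {2 ^ m..<2 ^ (m + 1)}"
proof (intro equalityI subsetI)
  fix N assume N: "N \<in> float_nats m \<inter> {2 ^ n..<2 ^ (n + 1)}"
  then have n: "floor_log N = n" by (intro floor_log_eqI) auto
  have "2 ^ m \<le> N"
    using N power_increasing[OF assms, of "2::nat"]
    by (meson IntD2 atLeastLessThan_iff order.trans one_le_numeral)
  moreover have "N = significand m N * 2 ^ (n - m)"
    using N float_nats_iff_dvd[of N m] by (simp add: significand_def n)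
  ultimately show "N \<in> (\<lambda>q. q * 2 ^ (n - m)) ` {2 ^ m..<2 ^ (m + 1)}"
    using significand_bounds[of m N] by (intro image_eqI[of _ _ "significand m N"]) auto
next
  fix N :: nat assume "N \<in> (\<lambda>q. q * 2 ^ (n - m)) ` {2 ^ m..<2 ^ (m + 1)}"
  then obtain q where N: "N = q * 2 ^ (n - m)" and q: "2 ^ m \<le> q" "q < 2 ^ (m + 1)" by auto
  have "2 ^ m * 2 ^ (n - m) \<le> N" "N < 2 ^ (m + 1) * 2 ^ (n - m)" using N q by simp_all
  moreover have "(2::nat) ^ m * 2 ^ (n - m) = 2 ^ n" "(2::nat) ^ (m + 1) * 2 ^ (n - m) = 2 ^ (n + 1)"
    using assms by (simp_all flip: power_add)
  ultimately have "N \<in> {2 ^ n..<2 ^ (n + 1)}" by simp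
  moreover have "N \<in> float_nats m" using N q(2) unfolding float_nats_def by blast
  ultimately show "N \<in> float_nats m \<inter> {2 ^ n..<2 ^ (n + 1)}" by blast
qed

lemma card_float_nats_below:
  assumes "m \<le> n"
  shows "card (float_nats m \<inter> {..<2 ^ n}) = 2 ^ m * (n - m + 1)"
  using assms
proof (induction n rule: dec_induct)
  case base
  have "float_nats m \<inter> {..<2 ^ m} = {..<2 ^ m}" by (auto intro: float_nats_small)
  then show ?case by simp
next
  case (step n)
  have split: "float_nats m \<inter> {..<2 ^ Suc n}
      = float_nats m \<inter> {..<2 ^ n} \<union> float_nats m \<inter> {2 ^ n..<2 ^ (n + 1)}" by auto
  have "card (float_nats m \<inter> {2 ^ n..<2 ^ (n + 1)}) = 2 ^ m"
    unfolding float_nats_binade[OF step.hyps(1)] by (subst card_image) (auto intro: inj_onI)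
  then show ?case
    unfolding split using step.hyps(1) step.IH by (subst card_Un_disjoint) (auto simp: Suc_diff_le)
qed

lemma float_nats_gap:
  fixes X N m :: nat
  defines "s \<equiv> 2 ^ (floor_log X - m)"
  assumes "N \<in> float_nats m"
  shows "N \<le> significand m X * s \<or> (significand m X + 1) * s \<le> N"
proof (cases "floor_log X \<le> m")
  case True
  then show ?thesis by (simp add: s_def significand_def, linarith)
next
  case False
  define q where "q = significand m X"
  have "2 ^ m \<le> X" using False pow2_less_of_less_floor_log[of m X] by simp
  then have "2 ^ m \<le> q" unfolding q_def by (rule significand_bounds)
  show ?thesis
  proof (rule ccontr)
    assume "\<not> ?thesis"
    then have between: "q * s < N" "N < (q + 1) * s" unfolding q_def by auto
    have "2 ^ floor_log X = 2 ^ m * s"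
      using False by (simp add: s_def flip: power_add)
    also have "\<dots> \<le> q * s" using \<open>2 ^ m \<le> q\<close> by simp
    finally have "floor_log X \<le> floor_log N"
      using between floor_log_le_iff[of "2 ^ floor_log X" N] by simp
    \<comment> \<open>N lies in the binade of X or above, where float_nats m consists of multiples of s\<close>
    then have "s dvd 2 ^ (floor_log N - m)" unfolding s_def by (simp add: le_imp_power_dvd)
    also have "\<dots> dvd N" using assms(2) float_nats_iff_dvd by blast
    finally obtain k where "N = k * s" by (metis dvdE mult.commute)
    with between have "q * s < k * s" "k * s < (q + 1) * s" by simp_all
    then have "q < k" "k < q + 1" by (simp_all only: mult_less_cancel2)
    then show False by simp
  qed
qed

lemma round_nat_bracket:
  fixes X m :: nat
  defines "s \<equiv> 2 ^ (floor_log X - m)" and "q \<equiv> significand m X"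
  shows "q * s \<le> X" and "X < (q + 1) * s"
    and "round_nat m X = q * s \<or> round_nat m X = (q + 1) * s"
    and "\<bar>real X - real (round_nat m X)\<bar> \<le> real X - real (q * s)"
    and "\<bar>real X - real (round_nat m X)\<bar> \<le> real ((q + 1) * s) - real X"
proof -
  have X: "X = q * s + X mod s"
    unfolding s_def q_def significand_def by (rule div_mult_mod_eq[symmetric])
  have r: "X mod s < s" by (simp add: s_def)
  have rnd: "round_nat m X = (if 2 * (X mod s) < s \<or> 2 * (X mod s) = s \<and> even q
      then q * s else (q + 1) * s)"
    by (simp add: round_nat_def s_def q_def Let_def)
  have "(q + 1) * s = q * s + s" by simp
  then show "q * s \<le> X" "X < (q + 1) * s" using X r by linarith+
  show "round_nat m X = q * s \<or> round_nat m X = (q + 1) * s" by (simp add: rnd)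
  have "real X = real (q * s) + real (X mod s)" using X by (metis of_nat_add)
  then show "\<bar>real X - real (round_nat m X)\<bar> \<le> real X - real (q * s)"
    and "\<bar>real X - real (round_nat m X)\<bar> \<le> real ((q + 1) * s) - real X"
    unfolding rnd using r by (auto simp: algebra_simps)
qed

lemma round_nat_in_float_nats: "round_nat m X \<in> float_nats m"
proof -
  have "significand m X * 2 ^ (floor_log X - m) \<in> float_nats m"
    using significand_less unfolding float_nats_def by blast
  moreover have "(significand m X + 1) * 2 ^ (floor_log X - m) \<in> float_nats m"
    by (rule float_nats_succ[OF significand_less])
  ultimately show ?thesis using round_nat_bracket(3)[where X = X and m = m] by auto
qed

lemma round_nat_id: "X \<in> float_nats m \<Longrightarrow> round_nat m X = X"
  unfolding float_nats_iff_dvd by (simp add: round_nat_def significand_def Let_def)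

lemma round_nat_nearest:
  assumes "N \<in> float_nats m"
  shows "\<bar>real X - real (round_nat m X)\<bar> \<le> \<bar>real X - real N\<bar>"
proof -
  define s where "s = (2::nat) ^ (floor_log X - m)"
  define q where "q = significand m X"
  note bracket = round_nat_bracket[where X = X and m = m, folded s_def q_def]
  have "N \<le> q * s \<or> (q + 1) * s \<le> N"
    using float_nats_gap[OF assms, of X] unfolding s_def q_def .
  then have "real N \<le> real (q * s) \<or> real ((q + 1) * s) \<le> real N"
    by (simp only: of_nat_le_iff)
  then show ?thesis
    using bracket(4,5) abs_ge_self[of "real X - real N"] abs_ge_minus_self[of "real X - real N"]
    by linarith
qed

lemma round_nat_le:
  assumes "N \<in> float_nats m" "X \<le> N"
  shows "round_nat m X \<le> N"
proof -
  define s where "s = (2::nat) ^ (floor_log X - m)"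
  define q where "q = significand m X"
  note bracket = round_nat_bracket[where X = X and m = m, folded s_def q_def]
  consider "round_nat m X = q * s" | "X = q * s" | "q * s < X" "round_nat m X = (q + 1) * s"
    using bracket(1,3) by linarith
  then show ?thesis
  proof cases
    case 2
    then have "real (round_nat m X) = real X" using bracket(4) by simp
    then have "round_nat m X = X" by (simp only: of_nat_eq_iff)
    then show ?thesis using assms(2) by simp
  next
    case 3
    then show ?thesis
      using float_nats_gap[OF assms(1), of X] assms(2) unfolding s_def q_def by linarith
  qed (use bracket(1) assms(2) in simp)
qed

lemma round_nat_tie:
  assumes "1 \<le> m" "N \<in> float_nats m" "N \<noteq> round_nat m X"
    and "\<bar>real X - real N\<bar> = \<bar>real X - real (round_nat m X)\<bar>"
  shows "even (significand m (round_nat m X)) \<and> odd (significand m N)"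
proof -
  define s where "s = (2::nat) ^ (floor_log X - m)"
  define q where "q = significand m X"
  note bracket = round_nat_bracket[where X = X and m = m, folded s_def q_def]
  have "real N \<le> real (q * s) \<or> real ((q + 1) * s) \<le> real N"
    using float_nats_gap[OF assms(2), of X] unfolding s_def q_def of_nat_le_iff .
  then have "real N = real (q * s) \<or> real N = real ((q + 1) * s)"
    using bracket(4,5) assms(4) by linarith
  then have "N = q * s \<or> N = (q + 1) * s" by (simp only: of_nat_eq_iff)
  then have ends: "{N, round_nat m X} = {q * s, (q + 1) * s}"
    using bracket(3) assms(3) by auto
  have mid: "real X - real (q * s) = real ((q + 1) * s) - real X"
    using ends assms(4) bracket(1,2) by (auto simp: doubleton_eq_iff)
  have X: "X = q * s + X mod s"
    unfolding s_def q_def significand_def by (rule div_mult_mod_eq[symmetric])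
  have "real (2 * X) = real (s + 2 * (q * s))" using mid by simp
  then have "2 * X = s + 2 * (q * s)" by (simp only: of_nat_eq_iff)
  then have half: "2 * (X mod s) = s" using X by linarith
  moreover have "s \<noteq> 0" by (simp add: s_def)
  ultimately have "2 \<le> s" by (cases "X mod s") auto
  then have "m < floor_log X" unfolding s_def by (cases "floor_log X \<le> m") simp_all
  then have "2 ^ m \<le> X" using pow2_less_of_less_floor_log[of m X] by simp
  then have q: "2 ^ m \<le> q" "q < 2 ^ (m + 1)"
    unfolding q_def by (rule significand_bounds)+
  have rnd: "round_nat m X = (if even q then q * s else (q + 1) * s)"
    using half by (simp add: round_nat_def Let_def s_def q_def)
  have "significand m (q * s) = q"
    unfolding s_def using q by (rule significand_normal)
  moreover have "even (significand m ((q + 1) * s)) \<longleftrightarrow> odd q"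
    unfolding s_def using assms(1) q by (rule significand_succ_parity)
  ultimately show ?thesis using ends assms(3) unfolding rnd by (auto simp: doubleton_eq_iff)
qed

lemma round_nat_pow2_minus_one:
  assumes "m + 2 \<le> l"
  shows "round_nat m (2 ^ l - 1) = 2 ^ l"
proof -
  define s where "s = (2::nat) ^ (l - 1 - m)"
  have "2 ^ 1 \<le> s" unfolding s_def using assms by (intro power_increasing) auto
  then have "2 \<le> s" by simp
  have "l = (m + 1) + (l - 1 - m)" using assms by simp
  then have l: "(2::nat) ^ l = 2 ^ (m + 1) * s" unfolding s_def by (metis power_add)
  have "(2::nat) ^ l = 2 * 2 ^ (l - 1)" "(1::nat) \<le> 2 ^ (l - 1)"
    using assms by (cases l; simp)+
  then have "floor_log (2 ^ l - 1) = l - 1" by (intro floor_log_eqI) linarith+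
  then have fl: "2 ^ (floor_log (2 ^ l - 1) - m) = s" by (simp add: s_def)
  have "(2 ^ (m + 1) - 1) * s = 2 ^ (m + 1) * s - s" by (simp add: diff_mult_distrib)
  moreover have "s \<le> 2 ^ (m + 1) * s" by simp
  ultimately have X: "2 ^ l - 1 = (s - 1) + (2 ^ (m + 1) - 1) * s"
    using l \<open>2 \<le> s\<close> by linarith
  have "s \<noteq> 0" "(s - 1) div s = 0" "(s - 1) mod s = s - 1" using \<open>2 \<le> s\<close> by simp_all
  then have q: "(2 ^ l - 1) div s = 2 ^ (m + 1) - 1" and r: "(2 ^ l - 1) mod s = s - 1"
    unfolding X by (simp_all only: div_mult_self1 mod_mult_self1 add_0_right not_False_eq_True)
  \<comment> \<open>the remainder s - 1 is at least s / 2 and the significand 2 ^ (m + 1) - 1 is odd\<close>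
  have "\<not> 2 * (s - 1) < s" and "2 * (s - 1) = s \<longrightarrow> odd (2 ^ (m + 1) - 1 :: nat)"
    using \<open>2 \<le> s\<close> by auto
  then show ?thesis
    unfolding round_nat_def Let_def significand_def fl q r using l by simp
qed

lemma round_nat_mult_pow2: "round_nat m (X * 2 ^ c) = round_nat m X * 2 ^ c"
proof (cases "X \<in> float_nats m")
  case True
  then show ?thesis by (simp add: round_nat_id float_nats_mult_pow2)
next
  case False
  then have "\<not> X < 2 ^ (m + 1)" using float_nats_small by blast
  then have "m + 1 \<le> floor_log X"
    using floor_log_le_iff[of "2 ^ (m + 1)" X] by simp
  moreover have "0 < X" using \<open>\<not> X < 2 ^ (m + 1)\<close> by (cases X) auto
  ultimately have "floor_log (X * 2 ^ c) - m = (floor_log X - m) + c"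
    using floor_log_mult_pow2[of X c] by simp
  then show ?thesis
    by (simp add: round_nat_def significand_def Let_def power_add mod_mult_mult2 algebra_simps
        flip: div_mult2_eq)
qed

lemma round_nat_image:
  "round_nat m ` {..<2 ^ l} = float_nats m \<inter> {..<2 ^ l} \<union> (if m + 2 \<le> l then {2 ^ l} else {})"
proof (intro equalityI subsetI)
  fix N assume "N \<in> round_nat m ` {..<2 ^ l}"
  then obtain i where i: "i < 2 ^ l" and N: "N = round_nat m i" by auto
  have "N \<in> float_nats m" "N \<le> 2 ^ l"
    using N i round_nat_in_float_nats round_nat_le[OF pow2_in_float_nats, of i l m] by auto
  moreover have "m + 2 \<le> l" if "N = 2 ^ l"
  proof (rule ccontr)
    assume "\<not> m + 2 \<le> l"
    then have "i < 2 ^ (m + 1)" using i power_increasing[of l "m + 1" "2::nat"] by simp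
    then have "N = i" using N round_nat_id float_nats_small by metis
    then show False using i that by simp
  qed
  ultimately show "N \<in> float_nats m \<inter> {..<2 ^ l} \<union> (if m + 2 \<le> l then {2 ^ l} else {})"
    by (cases "N = 2 ^ l") auto
next
  fix N assume "N \<in> float_nats m \<inter> {..<2 ^ l} \<union> (if m + 2 \<le> l then {2 ^ l} else {})"
  then consider "N \<in> float_nats m" "N < 2 ^ l" | "m + 2 \<le> l" "N = 2 ^ l"
    by (auto split: if_splits)
  then show "N \<in> round_nat m ` {..<2 ^ l}"
  proof cases
    case 1
    then show ?thesis using round_nat_id by (metis image_eqI lessThan_iff)
  next
    case 2
    then show ?thesis using round_nat_pow2_minus_one
      by (metis diff_less image_eqI lessThan_iff zero_less_one zero_less_power pos2)
  qed
qed

lemma card_round_nat_image: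
  "card (round_nat m ` {..<2 ^ l}) = (if l \<le> m + 1 then 2 ^ l else 2 ^ m * (l - m + 1) + 1)"
proof (cases "l \<le> m + 1")
  case True
  then have "float_nats m \<inter> {..<2 ^ l} = {..<2 ^ l}"
    using float_nats_small power_increasing[OF True, of "2::nat"] by fastforce
  then show ?thesis using True by (simp add: round_nat_image)
next
  case False
  then show ?thesis
    by (simp add: round_nat_image card_float_nats_below card_insert_if)
qed

section \<open>Floating-point numbers as scaled naturals\<close>

definition fp_unit :: "nat \<Rightarrow> nat \<Rightarrow> real" where
  "fp_unit E m = 2 powi (1 - fp_bias E - int m)"

lemma fp_unit_pos: "0 < fp_unit E m"
  by (simp add: fp_unit_def)

lemma fp_bias_eq: "1 \<le> E \<Longrightarrow> fp_bias E = int (2 ^ (E - 1) - 1)"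
  by (simp add: fp_bias_def of_nat_diff)

lemma fp_unit_mult_pow2: "fp_unit E m * 2 ^ (m + n) = 2 powi (1 - fp_bias E + int n)"
proof -
  have "fp_unit E m * 2 ^ (m + n) = 2 powi (1 - fp_bias E - int m) * 2 powi int (m + n)"
    unfolding fp_unit_def by (simp only: power_int_of_nat)
  also have "\<dots> = 2 powi ((1 - fp_bias E - int m) + int (m + n))"
    by (rule power_int_add[symmetric]) simp
  also have "(1 - fp_bias E - int m) + int (m + n) = 1 - fp_bias E + int n" by simp
  finally show ?thesis .
qed

lemma fp_rep_iff_unit:
  "fp_rep E m x f \<longleftrightarrow> f < 2 ^ m \<and> (\<exists>s \<in> {-1, 1}. x = s * fp_unit E m * real f
     \<or> (\<exists>e. 1 \<le> e \<and> e \<le> 2 ^ E - 2 \<and> x = s * fp_unit E m * real ((2 ^ m + f) * 2 ^ (e - 1))))"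
proof -
  have sub: "s * (real f / 2 ^ m) * 2 powi (1 - fp_bias E) = s * fp_unit E m * real f" for s
    using fp_unit_mult_pow2[of E m 0] by (simp add: field_simps)
  have norm: "s * (1 + real f / 2 ^ m) * 2 powi (int e - fp_bias E)
      = s * fp_unit E m * real ((2 ^ m + f) * 2 ^ (e - 1))" if "1 \<le> e" for s e
  proof -
    have "2 powi (int e - fp_bias E) = fp_unit E m * 2 ^ (m + (e - 1))"
      using fp_unit_mult_pow2[of E m "e - 1"] that by (simp add: of_nat_diff)
    then show ?thesis by (simp add: field_simps power_add)
  qed
  show ?thesis
    unfolding fp_rep_def by (simp only: sub norm cong: conj_cong)
qed

lemma fp_set_imp_unit_mult:
  assumes "x \<in> fp_set E m"
  shows "\<exists>N \<in> float_nats m. N < 2 ^ (m + (2 ^ E - 2)) \<and> \<bar>x\<bar> = fp_unit E m * real N"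
proof -
  obtain f s where f: "f < 2 ^ m" and s: "s \<in> {-1, 1}"
    and x: "x = s * fp_unit E m * real f \<or> (\<exists>e. 1 \<le> e \<and> e \<le> 2 ^ E - 2 \<and>
              x = s * fp_unit E m * real ((2 ^ m + f) * 2 ^ (e - 1)))"
    using assms unfolding fp_set_def fp_rep_iff_unit by blast
  have abs_x: "\<bar>s * fp_unit E m * real N\<bar> = fp_unit E m * real N" for N
    using s fp_unit_pos[of E m] by (auto simp: abs_mult)
  have "(2::nat) ^ m \<le> 2 ^ (m + (2 ^ E - 2))" by (simp add: power_increasing)
  from x show ?thesis
  proof
    assume "x = s * fp_unit E m * real f"
    moreover have "f \<in> float_nats m" using f by (intro float_nats_small) simp
    moreover have "f < 2 ^ (m + (2 ^ E - 2))"
      using f \<open>2 ^ m \<le> 2 ^ (m + (2 ^ E - 2))\<close> by (rule less_le_trans)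
    ultimately show ?thesis using abs_x by blast
  next
    assume "\<exists>e. 1 \<le> e \<and> e \<le> 2 ^ E - 2 \<and> x = s * fp_unit E m * real ((2 ^ m + f) * 2 ^ (e - 1))"
    then obtain e where e: "1 \<le> e" "e \<le> 2 ^ E - 2"
      and x: "x = s * fp_unit E m * real ((2 ^ m + f) * 2 ^ (e - 1))" by blast
    have "(2::nat) ^ (m + 1 + (e - 1)) \<le> 2 ^ (m + (2 ^ E - 2))"
      using e by (intro power_increasing) simp_all
    moreover have "(2 ^ m + f) * 2 ^ (e - 1) < 2 ^ (m + 1 + (e - 1))"
      using f by (simp add: power_add)
    ultimately have "(2 ^ m + f) * 2 ^ (e - 1) < 2 ^ (m + (2 ^ E - 2))" by linarith
    moreover have "(2 ^ m + f) * 2 ^ (e - 1) \<in> float_nats m"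
      using f unfolding float_nats_def by auto
    ultimately show ?thesis using abs_x[of "(2 ^ m + f) * 2 ^ (e - 1)"] x by blast
  qed
qed

lemma unit_mult_in_fp_set:
  assumes N: "N \<in> float_nats m" "N < 2 ^ (m + (2 ^ E - 2))"
    and abs_x: "\<bar>x\<bar> = fp_unit E m * real N"
  shows "x \<in> fp_set E m"
proof -
  obtain s :: real where s: "s \<in> {-1, 1}" and x: "x = s * fp_unit E m * real N"
    using abs_x by (cases "0 \<le> x") (auto intro: that[of 1] that[of "-1"])
  show ?thesis
  proof (cases "N < 2 ^ m")
    case True
    then have "fp_rep E m x N" using s x unfolding fp_rep_iff_unit by blast
    then show ?thesis unfolding fp_set_def by blast
  next
    case False
    define k where "k = floor_log N - m"
    define f where "f = significand m N - 2 ^ m"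
    have sig: "2 ^ m \<le> significand m N" "significand m N < 2 ^ (m + 1)"
      using False significand_bounds[of m N] by simp_all
    have "N = (2 ^ m + f) * 2 ^ (k + 1 - 1)"
      using N(1) sig(1) unfolding float_nats_iff_dvd f_def k_def significand_def by simp
    moreover have "f < 2 ^ m" using sig unfolding f_def by simp
    moreover have "k + 1 \<le> 2 ^ E - 2"
    proof -
      have "0 < m + (2 ^ E - 2)" using N(2) False by (cases "m + (2 ^ E - 2)") auto
      then have "floor_log N < m + (2 ^ E - 2)" using N(2) by (rule floor_log_less_pow2[rotated])
      moreover have "m \<le> floor_log N" using False floor_log_le_iff[of "2 ^ m" N] by simp
      ultimately show ?thesis unfolding k_def by linarith
    qed
    ultimately have "fp_rep E m x f" using s x unfolding fp_rep_iff_unit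
      by (intro conjI bexI[of _ s] disjI2 exI[of _ "k + 1"]) auto
    then show ?thesis unfolding fp_set_def by blast
  qed
qed

lemma fp_set_iff:
  "x \<in> fp_set E m \<longleftrightarrow>
     (\<exists>N \<in> float_nats m. N < 2 ^ (m + (2 ^ E - 2)) \<and> \<bar>x\<bar> = fp_unit E m * real N)"
  using fp_set_imp_unit_mult unit_mult_in_fp_set by blast

lemma fp_rep_unit_parity:
  assumes "1 \<le> m" and "fp_rep E m (fp_unit E m * real N) f"
  shows "even f \<longleftrightarrow> even (significand m N)"
proof -
  obtain s :: real where s: "s \<in> {-1, 1}" and f: "f < 2 ^ m" and
    rep: "fp_unit E m * real N = s * fp_unit E m * real f \<or> (\<exists>e. 1 \<le> e \<and> e \<le> 2 ^ E - 2 \<and>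
      fp_unit E m * real N = s * fp_unit E m * real ((2 ^ m + f) * 2 ^ (e - 1)))"
    using assms(2) unfolding fp_rep_iff_unit by blast
  have cancel: "fp_unit E m * real N = s * fp_unit E m * real M \<longleftrightarrow> real N = s * real M" for M
    using fp_unit_pos[of E m] by auto
  note rep = rep[unfolded cancel]
  from rep show ?thesis
  proof
    assume "real N = s * real f"
    then have "N = f" using s by auto
    moreover have "floor_log N < m" using f assms(1) \<open>N = f\<close> by (intro floor_log_less_pow2) auto
    ultimately show ?thesis by (simp add: significand_def)
  next
    assume "\<exists>e. 1 \<le> e \<and> e \<le> 2 ^ E - 2 \<and> real N = s * real ((2 ^ m + f) * 2 ^ (e - 1))"
    then obtain e where e: "real N = s * real ((2 ^ m + f) * 2 ^ (e - 1))" by blast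
    moreover have "0 < (2 ^ m + f) * 2 ^ (e - 1)" by simp
    then have "0 < real ((2 ^ m + f) * 2 ^ (e - 1))" by (simp only: of_nat_0_less_iff)
    ultimately have "s = 1" using s by (auto simp: mult_less_0_iff)
    then have "N = (2 ^ m + f) * 2 ^ (e - 1)" using e by (simp only: mult_1 of_nat_eq_iff)
    then have "significand m N = 2 ^ m + f" using f by (simp add: significand_normal)
    then show ?thesis using assms(1) by simp
  qed
qed

lemma fp_even_unit_iff:
  assumes "1 \<le> m" "N \<in> float_nats m" "N < 2 ^ (m + (2 ^ E - 2))"
  shows "fp_even E m (fp_unit E m * real N) \<longleftrightarrow> even (significand m N)"
proof -
  have "fp_unit E m * real N \<in> fp_set E m"
    using assms(2,3) fp_unit_pos[of E m] unfolding fp_set_iff by auto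
  then obtain f where "fp_rep E m (fp_unit E m * real N) f" unfolding fp_set_def by blast
  then show ?thesis using fp_rep_unit_parity[OF assms(1)] unfolding fp_even_def by blast
qed

lemma pow2_pred_double: "1 \<le> E \<Longrightarrow> (2::nat) ^ E = 2 * 2 ^ (E - 1)"
  by (cases E) simp_all

lemma fp_unit_mult_pow2_nat:
  assumes "1 \<le> E" "2 ^ (E - 1) \<le> n + 2"
  shows "fp_unit E m * 2 ^ (m + n) = 2 ^ (n + 2 - 2 ^ (E - 1))"
proof -
  have "1 - fp_bias E + int n = int (n + 2 - 2 ^ (E - 1))"
    using assms by (simp add: fp_bias_eq of_nat_diff)
  then show ?thesis using fp_unit_mult_pow2[of E m n] by (simp only: power_int_of_nat)
qed

lemma fp_unit_inverse:
  assumes "2 \<le> E"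
  shows "fp_unit E m * 2 ^ (m + (2 ^ (E - 1) - 2)) = 1"
proof -
  have "2 ^ 1 \<le> (2::nat) ^ (E - 1)" using assms by (intro power_increasing) simp_all
  then show ?thesis using fp_unit_mult_pow2_nat[of E "2 ^ (E - 1) - 2" m] assms by simp
qed

lemma fp_unit_max:
  assumes "2 \<le> E"
  shows "fp_unit E m * 2 ^ (m + (2 ^ E - 3)) = 2 ^ (2 ^ (E - 1) - 1)"
proof -
  have "2 ^ 1 \<le> (2::nat) ^ (E - 1)" using assms by (intro power_increasing) simp_all
  moreover have "(2::nat) ^ E = 2 * 2 ^ (E - 1)" using assms by (simp add: pow2_pred_double)
  ultimately show ?thesis using fp_unit_mult_pow2_nat[of E "2 ^ E - 3" m] assms
    by (simp add: numeral_3_eq_3)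
qed

lemma fl_eq_the_rne:
  assumes "1 \<le> E" "0 \<le> x" "x \<le> 2 ^ (2 ^ (E - 1) - 1)"
  shows "fl E m x = ereal (THE y. rne_of E m x y)"
proof -
  have "int (2 ^ E - 2) - fp_bias E = int (2 ^ (E - 1) - 1)"
    using assms(1) pow2_pred_double[OF assms(1)] by (simp add: fp_bias_eq of_nat_diff)
  then have emax: "2 powi (int (2 ^ E - 2) - fp_bias E) = (2::real) ^ (2 ^ (E - 1) - 1)"
    by (simp only: power_int_of_nat)
  have "- (int m + 1) = - int (m + 1)" by simp
  then have "(2::real) powi (- (int m + 1)) = inverse (2 ^ (m + 1))"
    by (simp only: power_int_minus power_int_of_nat)
  also have "\<dots> < 1"
    using one_less_power[of "2::real" "m + 1"] by (simp only: inverse_less_1_iff) simp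
  finally have "2 powi (- (int m + 1)) < (1::real)" .
  then have "1 * (2::real) ^ (2 ^ (E - 1) - 1)
      < (2 - 2 powi (- (int m + 1))) * 2 ^ (2 ^ (E - 1) - 1)"
    by (intro mult_strict_right_mono) simp_all
  then have "x < (2 - 2 powi (- (int m + 1))) * 2 powi (int (2 ^ E - 2) - fp_bias E)"
    unfolding emax using assms(3) by linarith
  then show ?thesis unfolding fl_def using assms(2) by simp
qed

lemma the_rne_eqI:
  assumes "y \<in> fp_set E m" and "\<forall>z \<in> fp_set E m. \<bar>x - y\<bar> \<le> \<bar>x - z\<bar>"
    and "\<forall>z \<in> fp_set E m. z \<noteq> y \<and> \<bar>x - z\<bar> = \<bar>x - y\<bar> \<longrightarrow> fp_even E m y \<and> \<not> fp_even E m z"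
  shows "(THE y. rne_of E m x y) = y"
proof (rule the_equality)
  show "rne_of E m x y" unfolding rne_of_def using assms by blast
next
  fix y' assume y': "rne_of E m x y'"
  then have "\<bar>x - y'\<bar> = \<bar>x - y\<bar>" using assms(1,2) unfolding rne_of_def by force
  with y' assms show "y' = y" unfolding rne_of_def by force
qed

lemma unit_round_nat_nearest:
  assumes "z \<in> fp_set E m"
  shows "\<bar>fp_unit E m * real X - fp_unit E m * real (round_nat m X)\<bar> \<le> \<bar>fp_unit E m * real X - z\<bar>"
proof -
  let ?u = "fp_unit E m"
  obtain N where N: "N \<in> float_nats m" and z: "\<bar>z\<bar> = ?u * real N"
    using assms unfolding fp_set_iff by blast
  have "\<bar>?u * real X - ?u * real (round_nat m X)\<bar> \<le> \<bar>?u * real X - ?u * real N\<bar>"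
    using round_nat_nearest[OF N, of X] fp_unit_pos[of E m]
    by (simp add: abs_mult mult_left_mono flip: right_diff_distrib)
  also have "\<dots> = \<bar>\<bar>?u * real X\<bar> - \<bar>z\<bar>\<bar>" using fp_unit_pos[of E m] by (simp add: z)
  also have "\<dots> \<le> \<bar>?u * real X - z\<bar>" by (rule abs_triangle_ineq3)
  finally show ?thesis .
qed

lemma zero_in_fp_set: "0 \<in> fp_set E m"
  using unit_mult_in_fp_set[OF float_nats_small[of 0 m], of E 0] by simp

lemma unit_round_nat_tie:
  fixes E m X :: nat
  defines "x \<equiv> fp_unit E m * real X" and "y \<equiv> fp_unit E m * real (round_nat m X)"
  assumes "1 \<le> m" "round_nat m X < 2 ^ (m + (2 ^ E - 2))"
    and "z \<in> fp_set E m" "z \<noteq> y" "\<bar>x - z\<bar> = \<bar>x - y\<bar>"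
  shows "fp_even E m y \<and> \<not> fp_even E m z"
proof -
  let ?u = "fp_unit E m" and ?R = "round_nat m X"
  have u: "0 < ?u" by (rule fp_unit_pos)
  have "0 \<le> z" \<comment> \<open>a negative z is farther from x \<ge> 0 than the float 0 is\<close>
  proof (rule ccontr)
    assume "\<not> 0 \<le> z"
    moreover have "\<bar>x - y\<bar> \<le> \<bar>x - 0\<bar>"
      unfolding x_def y_def by (rule unit_round_nat_nearest[OF zero_in_fp_set])
    ultimately show False using assms(7) u by (simp add: x_def)
  qed
  then obtain N where N: "N \<in> float_nats m" "N < 2 ^ (m + (2 ^ E - 2))" and zN: "z = ?u * real N"
    using assms(5) unfolding fp_set_iff by auto
  have "N \<noteq> ?R" using assms(6) zN y_def by auto
  moreover have "\<bar>real X - real N\<bar> = \<bar>real X - real ?R\<bar>"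
    using assms(7) u unfolding zN x_def y_def by (simp add: abs_mult flip: right_diff_distrib)
  ultimately have "even (significand m ?R) \<and> odd (significand m N)"
    using round_nat_tie[OF assms(3) N(1)] by blast
  moreover have "fp_even E m y \<longleftrightarrow> even (significand m ?R)"
    unfolding y_def using round_nat_in_float_nats assms(4) by (rule fp_even_unit_iff[OF assms(3)])
  moreover have "fp_even E m z \<longleftrightarrow> even (significand m N)"
    unfolding zN using N by (rule fp_even_unit_iff[OF assms(3)])
  ultimately show ?thesis by simp
qed

lemma the_rne_unit_round_nat:
  assumes "1 \<le> m" and "round_nat m X < 2 ^ (m + (2 ^ E - 2))"
  shows "(THE y. rne_of E m (fp_unit E m * real X) y) = fp_unit E m * real (round_nat m X)"
proof (rule the_rne_eqI)
  show "fp_unit E m * real (round_nat m X) \<in> fp_set E m"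
    using fp_unit_pos[of E m] assms(2) round_nat_in_float_nats
    by (intro unit_mult_in_fp_set[of "round_nat m X"]) simp_all
qed (use unit_round_nat_nearest unit_round_nat_tie[OF assms] in blast)+

lemma fl_unit_mult:
  assumes "2 \<le> E" "1 \<le> m" "X < 2 ^ (m + (2 ^ E - 3))"
  shows "fl E m (fp_unit E m * real X) = ereal (fp_unit E m * real (round_nat m X))"
proof -
  have "round_nat m X \<le> 2 ^ (m + (2 ^ E - 3))"
    using assms(3) by (intro round_nat_le pow2_in_float_nats) simp
  also have "\<dots> < 2 ^ (m + (2 ^ E - 2))"
  proof -
    have "2 ^ 2 \<le> (2::nat) ^ E" using assms(1) by (rule power_increasing) simp
    then show ?thesis by (intro power_strict_increasing) simp_all
  qed
  finally have R: "round_nat m X < 2 ^ (m + (2 ^ E - 2))" .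
  have "fp_unit E m * real X \<le> fp_unit E m * 2 ^ (m + (2 ^ E - 3))"
    using assms(3) fp_unit_pos[of E m] by (intro mult_left_mono) (simp_all add: less_imp_le)
  then have "fp_unit E m * real X \<le> 2 ^ (2 ^ (E - 1) - 1)" using fp_unit_max[OF assms(1)] by simp
  then show ?thesis using assms(1) fp_unit_pos[of E m]
    by (simp add: fl_eq_the_rne the_rne_unit_round_nat[OF assms(2) R])
qed

lemma fl_div_pow2:
  assumes "2 \<le> E" "1 \<le> m" "k \<le> m + (2 ^ (E - 1) - 2)"
    and "real X / 2 ^ k < 2 ^ (2 ^ (E - 1) - 1)"
  shows "fl E m (real X / 2 ^ k) = ereal (real (round_nat m X) / 2 ^ k)"
proof -
  define c where "c = m + (2 ^ (E - 1) - 2) - k"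
  have "fp_unit E m * 2 ^ c * 2 ^ k = 1"
    using fp_unit_inverse[OF assms(1), of m] assms(3)
    by (simp add: c_def mult.assoc flip: power_add)
  then have "fp_unit E m * 2 ^ c = 1 / 2 ^ k" by (simp add: eq_divide_eq)
  then have scale: "real N / 2 ^ k = fp_unit E m * real (N * 2 ^ c)" for N
    by (simp add: mult.left_commute[of "fp_unit E m"])
  have "fp_unit E m * real (X * 2 ^ c) < fp_unit E m * 2 ^ (m + (2 ^ E - 3))"
    using assms(4) unfolding scale fp_unit_max[OF assms(1)] .
  then have "real (X * 2 ^ c) < real ((2::nat) ^ (m + (2 ^ E - 3)))"
    using fp_unit_pos[of E m] by simp
  then have "X * 2 ^ c < 2 ^ (m + (2 ^ E - 3))" by (simp only: of_nat_less_iff)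
  then show ?thesis
    unfolding scale round_nat_mult_pow2[symmetric] by (rule fl_unit_mult[OF assms(1,2)])
qed

lemma card_fp_set_unit_interval:
  assumes "2 \<le> E"
  shows "card (fp_set E m \<inter> {0..1}) = 2 ^ m * (2 ^ (E - 1) - 1) + 1"
proof -
  define P where "P = m + (2 ^ (E - 1) - 2)"
  let ?u = "fp_unit E m"
  have u: "0 < ?u" by (rule fp_unit_pos)
  have two: "2 \<le> (2::nat) ^ (E - 1)" "(2::nat) ^ E = 2 * 2 ^ (E - 1)"
    using assms power_increasing[of 1 "E - 1" "2::nat"] pow2_pred_double[of E] by simp_all
  have le_one: "?u * real N \<le> 1 \<longleftrightarrow> N \<le> 2 ^ P" for N
  proof -
    have "?u * real N \<le> 1 \<longleftrightarrow> ?u * real N \<le> ?u * real ((2::nat) ^ P)"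
      using fp_unit_inverse[OF assms, of m] by (simp add: P_def)
    also have "\<dots> \<longleftrightarrow> N \<le> 2 ^ P" using u by simp
    finally show ?thesis .
  qed
  have P_less: "(2::nat) ^ P < 2 ^ (m + (2 ^ E - 2))"
    using two by (intro power_strict_increasing) (simp_all add: P_def)
  have image: "fp_set E m \<inter> {0..1} = (\<lambda>N. ?u * real N) ` (float_nats m \<inter> {..2 ^ P})"
  proof (intro equalityI subsetI)
    fix z assume z: "z \<in> fp_set E m \<inter> {0..1}"
    then have "z \<in> fp_set E m" by simp
    then obtain N where "N \<in> float_nats m" "\<bar>z\<bar> = ?u * real N"
      unfolding fp_set_iff by blast
    moreover have "\<bar>z\<bar> = z" using z by simp
    ultimately show "z \<in> (\<lambda>N. ?u * real N) ` (float_nats m \<inter> {..2 ^ P})"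
      using z le_one by auto
  next
    fix z assume "z \<in> (\<lambda>N. ?u * real N) ` (float_nats m \<inter> {..2 ^ P})"
    then obtain N where N: "N \<in> float_nats m" "N \<le> 2 ^ P" and z: "z = ?u * real N" by auto
    have "N < 2 ^ (m + (2 ^ E - 2))" using N(2) P_less by (rule le_less_trans)
    then have "z \<in> fp_set E m"
      using N(1) z u unfolding fp_set_iff by (intro bexI[of _ N]) auto
    then show "z \<in> fp_set E m \<inter> {0..1}" using N z le_one u by simp
  qed
  have "inj_on (\<lambda>N. ?u * real N) A" for A using u by (auto intro: inj_onI)
  then have "card (fp_set E m \<inter> {0..1}) = card (float_nats m \<inter> {..2 ^ P})"
    unfolding image by (rule card_image)
  also have "float_nats m \<inter> {..2 ^ P} = insert (2 ^ P) (float_nats m \<inter> {..<2 ^ P})"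
    using pow2_in_float_nats by auto
  also have "card \<dots> = card (float_nats m \<inter> {..<2 ^ P}) + 1" by simp
  also have "\<dots> = 2 ^ m * (P - m + 1) + 1" by (simp add: card_float_nats_below P_def)
  also have "P - m + 1 = 2 ^ (E - 1) - 1" using two(1) by (simp add: P_def)
  finally show ?thesis .
qed

lemma fl_div_pow2_le:
  assumes "2 \<le> E" "1 \<le> m" "l + 2 \<le> 2 ^ (E - 1)" "X \<le> 2 ^ l" "k \<le> l"
  shows "fl E m (real X / 2 ^ k) = ereal (real (round_nat m X) / 2 ^ k)"
proof (rule fl_div_pow2[OF assms(1,2)])
  show "k \<le> m + (2 ^ (E - 1) - 2)" using assms(3,5) by linarith
  have "real X / 2 ^ k \<le> 2 ^ l"
    using assms(4) by (simp add: divide_le_eq order_trans[OF _ mult_le_cancel_left1[THEN iffD2]])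
  also have "\<dots> < 2 ^ (2 ^ (E - 1) - 1)" using assms(3) by (intro power_strict_increasing) simp_all
  finally show "real X / 2 ^ k < 2 ^ (2 ^ (E - 1) - 1)" .
qed

lemma fl_ext_fl_div_fl_pow2:
  assumes "2 \<le> E" "1 \<le> m" "l + 2 \<le> 2 ^ (E - 1)" "i < 2 ^ l"
  shows "fl_ext E m (fl E m (real i) / fl E m (2 ^ l)) = ereal (real (round_nat m i) / 2 ^ l)"
proof -
  note fl_exact = fl_div_pow2_le[OF assms(1-3)]
  have "round_nat m i \<le> 2 ^ l" using assms(4) by (intro round_nat_le pow2_in_float_nats) simp
  then have "fl E m (real (round_nat m i) / 2 ^ l) = ereal (real (round_nat m i) / 2 ^ l)"
    using fl_exact[of "round_nat m i" l] round_nat_id[OF round_nat_in_float_nats] by simp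
  moreover have "fl E m (real i) = ereal (real (round_nat m i))"
    using fl_exact[of i 0] assms(4) by simp
  moreover have "fl E m (2 ^ l) = ereal (2 ^ l)"
    using fl_exact[of "2 ^ l" 0] round_nat_id[OF pow2_in_float_nats] by simp
  ultimately show ?thesis by (simp add: fl_ext_def)
qed

theorem propositionB1:
  fixes E m l :: nat
  assumes "E \<ge> 1" and "m \<ge> 1"
    and "int l \<le> 2 ^ (E - 1) - 2"
  shows "let r = (if l \<le> m + 1
                  then 2 ^ l / (2 ^ m * (2 ^ (E - 1) - 1) + 1)
                  else (2 ^ m * (real l - real m + 1) + 1) / (2 ^ m * (2 ^ (E - 1) - 1) + 1) :: real)
         in real (card ((\<lambda>i. fl E m (real i / 2 ^ l)) ` {0..<2 ^ l}))
              / real (card (fp_set E m \<inter> {0..1})) = r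
          \<and> real (card ((\<lambda>i. fl_ext E m (fl E m (real i) / fl E m (2 ^ l))) ` {0..<2 ^ l}))
              / real (card (fp_set E m \<inter> {0..1})) = r"
proof -
  have E: "2 \<le> E" using assms(1,3) by (cases "E = 1") auto
  have "int (l + 2) \<le> int (2 ^ (E - 1))" using assms(3) by simp
  then have l: "l + 2 \<le> 2 ^ (E - 1)" by (simp only: of_nat_le_iff)
  define g where "g N = ereal (real N / 2 ^ l)" for N
  have "(\<lambda>i. fl E m (real i / 2 ^ l)) ` {0..<2 ^ l} = g ` round_nat m ` {..<2 ^ l}"
    and "(\<lambda>i. fl_ext E m (fl E m (real i) / fl E m (2 ^ l))) ` {0..<2 ^ l}
      = g ` round_nat m ` {..<2 ^ l}"
    unfolding image_image g_def
    by (auto simp: fl_div_pow2_le[OF E assms(2) l] fl_ext_fl_div_fl_pow2[OF E assms(2) l]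
        intro!: image_cong)
  moreover have "inj_on g A" for A by (rule inj_onI) (simp add: g_def)
  ultimately have "card ((\<lambda>i. fl E m (real i / 2 ^ l)) ` {0..<2 ^ l})
      = card (round_nat m ` {..<2 ^ l})"
    and "card ((\<lambda>i. fl_ext E m (fl E m (real i) / fl E m (2 ^ l))) ` {0..<2 ^ l})
      = card (round_nat m ` {..<2 ^ l})"
    by (simp_all add: card_image)
  moreover have "real (card (round_nat m ` {..<2 ^ l}))
      = (if l \<le> m + 1 then 2 ^ l else 2 ^ m * (real l - real m + 1) + 1)"
    by (simp add: card_round_nat_image of_nat_diff distrib_left)
  moreover have "real (card (fp_set E m \<inter> {0..1})) = 2 ^ m * (2 ^ (E - 1) - 1) + 1"
    using E by (simp add: card_fp_set_unit_interval of_nat_diff)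
  ultimately show ?thesis by (simp add: Let_def)
qed

end
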